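(* Let $c$ be a cost function, $\alpha_i>0$, $m_i$ measures on $\mathbb{R}^n$, and let $(\Phi_1,\dots,\Phi_N)$ be an admissible tuple maximizing $\mathcal{BS}_{\alpha,m}$ over all admissible tuples, with $0<\int e^{-\alpha_i\Phi_i}dm_i<\infty$ for all $i$. Let $\mu_i=e^{-\alpha_i\Phi_i}m_i/\int e^{-\alpha_i\Phi_i}dm_i$ and assume the Kantorovich duality holds for $(c;\mu_1,\dots,\mu_N)$. Then $(\Phi_1,\dots,\Phi_N)$ is a minimizer of the dual transportation problem for $c$ and $\mu_1,\dots,\mu_N$.
   Context: Points of $(\mathbb{R}^n)^N$ are written $x=(x_1,\dots,x_N)$, $x_i\in\mathbb{R}^n$. A tuple $(V_1,\dots,V_N)$ of functions $V_i:\mathbb{R}^n\to(-\infty,+\infty]$ is admissible (for the cost $c$) if $\sum_{i=1}^N V_i(x_i)\ge c(x)$ for all $x$. $\mathcal{BS}_{\alpha,m}(V_1,\dots,V_N)=\prod_{i=1}^N\bigl(\int_{\mathbb{R}^n}e^{-\alpha_iV_i}dm_i\bigr)^{1/\alpha_i}$. Kantorovich duality: for probability measures $\mu_1,\dots,\mu_N$, the primal problem is to maximize $\int c\,d\pi$ over probability measures $\pi$ on $(\mathbb{R}^n)^N$ with marginals $\mu_i$; the dual problem is to minimize $\sum_i\int f_i\,d\mu_i$ over admissible tuples $(f_i)$ with $f_i\in L^1(\mu_i)$. The Kantorovich duality holds for $(c;\mu_1,\dots,\mu_N)$ if the primal problem has a maximizer, the dual problem has a minimizer, and the two optimal values are equal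 and finite. *)

theory Defs
  imports "HOL-Probability.Probability"
begin

text \<open>Index set {1..N} is rendered as a finite type 'i; points of (R^n)^N are
  functions x :: 'i \<Rightarrow> 'a with 'a a Euclidean space. Functions with values in
  (-\<infinity>,+\<infinity>] are ereal-valued functions never equal to -\<infinity>.\<close>

definition admissible :: "(('i::finite \<Rightarrow> 'a) \<Rightarrow> real) \<Rightarrow> ('i \<Rightarrow> 'a \<Rightarrow> ereal) \<Rightarrow> bool" where
  "admissible c V \<longleftrightarrow> (\<forall>i x. V i x \<noteq> -\<infinity>) \<and> (\<forall>x. ereal (c x) \<le> (\<Sum>i\<in>UNIV. V i (x i)))"

definition expw :: "real \<Rightarrow> ('a \<Rightarrow> ereal) \<Rightarrow> 'a \<Rightarrow> ennreal" where
  "expw \<alpha> \<phi> x = (if \<phi> x = \<infinity> then 0 else ennreal (exp (- \<alpha> * real_of_ereal (\<phi> x))))"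

definition enn_powr :: "ennreal \<Rightarrow> real \<Rightarrow> ennreal" where
  "enn_powr I p = (if I = \<infinity> then \<infinity> else ennreal (enn2real I powr p))"

definition BS :: "('i::finite \<Rightarrow> real) \<Rightarrow> ('i \<Rightarrow> 'a measure) \<Rightarrow> ('i \<Rightarrow> 'a \<Rightarrow> ereal) \<Rightarrow> ennreal" where
  "BS \<alpha> m V = (\<Prod>i\<in>UNIV. enn_powr (\<integral>\<^sup>+ x. expw (\<alpha> i) (V i) x \<partial>m i) (1 / \<alpha> i))"

definition is_plan :: "('i::finite \<Rightarrow> 'a::euclidean_space measure) \<Rightarrow> ('i \<Rightarrow> 'a) measure \<Rightarrow> bool" where
  "is_plan \<mu> \<pi> \<longleftrightarrow> prob_space \<pi> \<and> sets \<pi> = sets (PiM UNIV (\<lambda>_. borel))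
     \<and> (\<forall>i. distr \<pi> borel (\<lambda>x. x i) = \<mu> i)"

definition primal_max :: "(('i::finite \<Rightarrow> 'a::euclidean_space) \<Rightarrow> real) \<Rightarrow> ('i \<Rightarrow> 'a measure) \<Rightarrow> ('i \<Rightarrow> 'a) measure \<Rightarrow> bool" where
  "primal_max c \<mu> \<pi> \<longleftrightarrow> is_plan \<mu> \<pi> \<and> integrable \<pi> c \<and>
     (\<forall>\<pi>'. is_plan \<mu> \<pi>' \<and> integrable \<pi>' c \<longrightarrow> (\<integral>x. c x \<partial>\<pi>') \<le> (\<integral>x. c x \<partial>\<pi>))"

definition dual_feasible :: "(('i::finite \<Rightarrow> 'a) \<Rightarrow> real) \<Rightarrow> ('i \<Rightarrow> 'a measure) \<Rightarrow> ('i \<Rightarrow> 'a \<Rightarrow> ereal) \<Rightarrow> bool" where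
  "dual_feasible c \<mu> f \<longleftrightarrow> admissible c f \<and>
     (\<forall>i. f i \<in> borel_measurable (\<mu> i) \<and> (AE x in \<mu> i. f i x \<noteq> \<infinity>)
          \<and> integrable (\<mu> i) (\<lambda>x. real_of_ereal (f i x)))"

definition dual_value :: "('i::finite \<Rightarrow> 'a measure) \<Rightarrow> ('i \<Rightarrow> 'a \<Rightarrow> ereal) \<Rightarrow> real" where
  "dual_value \<mu> f = (\<Sum>i\<in>UNIV. \<integral>x. real_of_ereal (f i x) \<partial>\<mu> i)"

definition dual_min :: "(('i::finite \<Rightarrow> 'a) \<Rightarrow> real) \<Rightarrow> ('i \<Rightarrow> 'a measure) \<Rightarrow> ('i \<Rightarrow> 'a \<Rightarrow> ereal) \<Rightarrow> bool" where
  "dual_min c \<mu> f \<longleftrightarrow> dual_feasible c \<mu> f \<and>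
     (\<forall>g. dual_feasible c \<mu> g \<longrightarrow> dual_value \<mu> f \<le> dual_value \<mu> g)"

definition kantorovich_duality :: "(('i::finite \<Rightarrow> 'a::euclidean_space) \<Rightarrow> real) \<Rightarrow> ('i \<Rightarrow> 'a measure) \<Rightarrow> bool" where
  "kantorovich_duality c \<mu> \<longleftrightarrow> (\<exists>\<pi> f. primal_max c \<mu> \<pi> \<and> dual_min c \<mu> f \<and>
     (\<integral>x. c x \<partial>\<pi>) = dual_value \<mu> f)"

end

theory Submission
  imports Defs
begin

text \<open>
  Let \<open>Z\<^sub>i = \<integral> exp(-\<alpha>\<^sub>i \<Phi>\<^sub>i) dm\<^sub>i\<close>. For a competitor \<open>g\<close>, changing the measure from \<open>m\<^sub>i\<close> to
  \<open>\<mu>\<^sub>i\<close> gives \<open>\<integral> exp(-\<alpha>\<^sub>i g\<^sub>i) dm\<^sub>i \<ge> Z\<^sub>i \<integral> exp(-\<alpha>\<^sub>i (g\<^sub>i - \<Phi>\<^sub>i)) d\<mu>\<^sub>i\<close>, so maximality of BS at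
  \<open>\<Phi>\<close> yields \<open>\<Prod>\<^sub>i (\<integral> exp(-\<alpha>\<^sub>i (g\<^sub>i - \<Phi>\<^sub>i)) d\<mu>\<^sub>i)\<^bsup>1/\<alpha>\<^sub>i\<^esup> \<le> 1\<close>. Jensen's inequality for exp
  turns this into \<open>\<Sum>\<^sub>i \<integral> (g\<^sub>i - \<Phi>\<^sub>i) d\<mu>\<^sub>i \<ge> 0\<close>.
  Kantorovich duality is only needed to know that \<open>\<Phi>\<^sub>i \<in> L\<^sup>1(\<mu>\<^sub>i)\<close>: the positive part is
  controlled by \<open>exp(-\<alpha>\<^sub>i (f\<^sub>i - \<Phi>\<^sub>i))\<close> and \<open>|f\<^sub>i|\<close> for a dual minimizer \<open>f\<close>, the negative part
  by integrating \<open>\<Phi>\<^sub>i(x\<^sub>i) \<ge> c(x) - \<Sum>\<^sub>j\<^sub>\<noteq>\<^sub>i \<Phi>\<^sub>j(x\<^sub>j)\<close> against an optimal plan.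
\<close>

lemma expw_measurable[measurable]:
  assumes [measurable]: "\<phi> \<in> borel_measurable M"
  shows "expw \<alpha> \<phi> \<in> borel_measurable M"
  unfolding expw_def by measurable

lemma expw_mult_exp_diff:
  assumes "\<phi> x \<noteq> \<infinity>" and "f x \<noteq> \<infinity>"
  shows "expw \<alpha> \<phi> x * ennreal (exp (- \<alpha> * (real_of_ereal (f x) - real_of_ereal (\<phi> x))))
    = expw \<alpha> f x"
proof -
  have "exp (- \<alpha> * real_of_ereal (\<phi> x)) * exp (- \<alpha> * (real_of_ereal (f x) - real_of_ereal (\<phi> x)))
      = exp (- \<alpha> * real_of_ereal (f x))"
    by (simp add: mult_exp_exp algebra_simps)
  then show ?thesis
    using assms by (simp add: expw_def ennreal_mult''[symmetric])
qed

lemma enn_powr_ennreal: "0 \<le> x \<Longrightarrow> enn_powr (ennreal x) p = ennreal (x powr p)"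
  by (simp add: enn_powr_def)

lemma enn_powr_eq_top_iff [simp]: "enn_powr a p = \<top> \<longleftrightarrow> a = \<top>"
  by (simp add: enn_powr_def)

lemma enn_powr_top [simp]: "enn_powr \<top> p = \<top>"
  by (simp add: enn_powr_def)

lemma enn_powr_zero [simp]: "enn_powr 0 p = 0"
  by (simp add: enn_powr_def)

lemma enn_powr_pos: "0 < a \<Longrightarrow> 0 < enn_powr a p"
  by (cases a) (auto simp: enn_powr_def enn2real_positive_iff)

lemma enn_powr_mult: "enn_powr (a * b) p = enn_powr a p * enn_powr b p"
proof (cases "a = 0 \<or> b = 0")
  case False
  then have pos: "0 < enn_powr a p" "0 < enn_powr b p"
    by (metis enn_powr_pos not_gr_zero)+
  show ?thesis
  proof (cases "a = \<infinity> \<or> b = \<infinity>")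
    case True
    with False pos show ?thesis
      by (auto simp: ennreal_top_mult ennreal_mult_top)
  next
    case False
    then show ?thesis
      by (cases a; cases b) (simp_all add: enn_powr_ennreal powr_mult flip: ennreal_mult')
  qed
qed auto

lemma enn_powr_mono: "0 \<le> p \<Longrightarrow> a \<le> b \<Longrightarrow> enn_powr a p \<le> enn_powr b p"
  by (cases a; cases b) (auto simp: enn_powr_def top_unique intro!: powr_mono2 ennreal_leI)

definition gibbs_measure :: "real \<Rightarrow> 'a measure \<Rightarrow> ('a \<Rightarrow> ereal) \<Rightarrow> 'a measure" where
  "gibbs_measure \<alpha> m \<phi> = density m (\<lambda>x. expw \<alpha> \<phi> x / (\<integral>\<^sup>+ y. expw \<alpha> \<phi> y \<partial>m))"

lemma sets_gibbs_measure [measurable_cong, simp]: "sets (gibbs_measure \<alpha> m \<phi>) = sets m"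
  by (simp add: gibbs_measure_def)

lemma space_gibbs_measure [simp]: "space (gibbs_measure \<alpha> m \<phi>) = space m"
  by (simp add: gibbs_measure_def)

lemma AE_gibbs_measure_not_infty:
  assumes [measurable]: "\<phi> \<in> borel_measurable m"
  shows "AE x in gibbs_measure \<alpha> m \<phi>. \<phi> x \<noteq> \<infinity>"
  unfolding gibbs_measure_def by (subst AE_density) (auto simp: expw_def)

context
  fixes \<alpha> :: real and m :: "'a measure" and \<phi> :: "'a \<Rightarrow> ereal"
  assumes \<phi>_measurable [measurable]: "\<phi> \<in> borel_measurable m"
    and partition_pos: "0 < (\<integral>\<^sup>+ x. expw \<alpha> \<phi> x \<partial>m)"
    and partition_finite: "(\<integral>\<^sup>+ x. expw \<alpha> \<phi> x \<partial>m) < \<infinity>"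
begin

lemma prob_space_gibbs_measure: "prob_space (gibbs_measure \<alpha> m \<phi>)"
proof
  let ?Z = "\<integral>\<^sup>+ x. expw \<alpha> \<phi> x \<partial>m"
  have "emeasure (gibbs_measure \<alpha> m \<phi>) (space (gibbs_measure \<alpha> m \<phi>))
      = (\<integral>\<^sup>+ x. expw \<alpha> \<phi> x / ?Z * indicator (space m) x \<partial>m)"
    unfolding gibbs_measure_def space_density by (rule emeasure_density) auto
  also have "\<dots> = (\<integral>\<^sup>+ x. expw \<alpha> \<phi> x / ?Z \<partial>m)"
    by (rule nn_integral_cong) simp
  also have "\<dots> = ?Z / ?Z"
    by (rule nn_integral_divide) measurable
  also have "\<dots> = 1"
    using partition_pos partition_finite by simp
  finally show "emeasure (gibbs_measure \<alpha> m \<phi>) (space (gibbs_measure \<alpha> m \<phi>)) = 1" .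
qed

lemma nn_integral_gibbs_measure_exp_diff_le:
  assumes [measurable]: "f \<in> borel_measurable m"
    and f_finite: "AE x in gibbs_measure \<alpha> m \<phi>. f x \<noteq> \<infinity>"
  shows "(\<integral>\<^sup>+ x. expw \<alpha> \<phi> x \<partial>m) *
      (\<integral>\<^sup>+ x. ennreal (exp (- \<alpha> * (real_of_ereal (f x) - real_of_ereal (\<phi> x)))) \<partial>gibbs_measure \<alpha> m \<phi>)
    \<le> (\<integral>\<^sup>+ x. expw \<alpha> f x \<partial>m)"
proof -
  let ?Z = "\<integral>\<^sup>+ x. expw \<alpha> \<phi> x \<partial>m"
  let ?E = "\<lambda>x. ennreal (exp (- \<alpha> * (real_of_ereal (f x) - real_of_ereal (\<phi> x))))"
  have "AE x in m. expw \<alpha> \<phi> x / ?Z * ?E x \<le> expw \<alpha> f x / ?Z"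
  proof -
    have "AE x in m. 0 < expw \<alpha> \<phi> x / ?Z \<longrightarrow> f x \<noteq> \<infinity>"
      using f_finite unfolding gibbs_measure_def by (subst (asm) AE_density) auto
    then show ?thesis
    proof eventually_elim
      case (elim x)
      show ?case
      proof (cases "\<phi> x = \<infinity> \<or> f x = \<infinity>")
        case False
        then have "expw \<alpha> \<phi> x * ?E x = expw \<alpha> f x"
          by (intro expw_mult_exp_diff) auto
        then show ?thesis
          by (simp add: ennreal_divide_times ennreal_times_divide mult.commute)
      qed (use elim in \<open>auto simp: expw_def\<close>)
    qed
  qed
  then have "(\<integral>\<^sup>+ x. ?E x \<partial>gibbs_measure \<alpha> m \<phi>) \<le> (\<integral>\<^sup>+ x. expw \<alpha> f x \<partial>m) / ?Z"
    unfolding gibbs_measure_def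
    by (simp add: nn_integral_density nn_integral_divide[symmetric] nn_integral_mono_AE)
  then have "?Z * (\<integral>\<^sup>+ x. ?E x \<partial>gibbs_measure \<alpha> m \<phi>)
      \<le> ?Z * ((\<integral>\<^sup>+ x. expw \<alpha> f x \<partial>m) / ?Z)"
    by (rule mult_left_mono) simp
  also have "\<dots> = (\<integral>\<^sup>+ x. expw \<alpha> f x \<partial>m)"
    using partition_pos partition_finite
    by (simp add: ennreal_times_divide ennreal_mult_divide_eq mult.commute[of ?Z])
  finally show ?thesis .
qed

end

lemma (in prob_space) exp_integral_le_nn_integral_exp:
  assumes h: "integrable M h"
  shows "ennreal (exp (\<integral>x. h x \<partial>M)) \<le> (\<integral>\<^sup>+ x. ennreal (exp (h x)) \<partial>M)"
proof (cases "(\<integral>\<^sup>+ x. ennreal (exp (h x)) \<partial>M) = \<infinity>")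
  case False
  then have exp_h: "integrable M (\<lambda>x. exp (h x))"
    using h by (intro integrableI_nonneg) (auto simp: less_top)
  have "exp (\<integral>x. h x \<partial>M) \<le> (\<integral>x. exp (h x) \<partial>M)"
    using h exp_h exp_convex by (intro jensens_inequality[where I = UNIV]) auto
  also have "\<dots> = enn2real (\<integral>\<^sup>+ x. ennreal (exp (h x)) \<partial>M)"
    using h by (intro integral_eq_nn_integral) auto
  finally have "ennreal (exp (\<integral>x. h x \<partial>M)) \<le> ennreal (enn2real (\<integral>\<^sup>+ x. ennreal (exp (h x)) \<partial>M))"
    by (rule ennreal_leI)
  also have "\<dots> = (\<integral>\<^sup>+ x. ennreal (exp (h x)) \<partial>M)"
    using False by (simp add: ennreal_enn2real_if)
  finally show ?thesis .
qed simp

lemma (in prob_space) nn_integral_exp_pos: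
  assumes [measurable]: "h \<in> borel_measurable M"
  shows "0 < (\<integral>\<^sup>+ x. ennreal (exp (h x)) \<partial>M)"
proof (rule ccontr)
  assume "\<not> ?thesis"
  then have "(\<integral>\<^sup>+ x. ennreal (exp (h x)) \<partial>M) = 0"
    by (simp add: not_less)
  then have "AE x in M. ennreal (exp (h x)) = 0"
    by (simp add: nn_integral_0_iff_AE)
  then show False
    by (simp add: AE_False)
qed

lemma pos_part_le_exp_bound:
  fixes t s \<alpha> :: real
  assumes "0 < \<alpha>"
  shows "max 0 t \<le> exp (- \<alpha> * (s - t)) / \<alpha> + \<bar>s\<bar>"
proof -
  have "\<alpha> * (t - s) \<le> exp (- \<alpha> * (s - t))"
    using exp_ge_add_one_self[of "- \<alpha> * (s - t)"] by (simp add: algebra_simps)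
  then have "t - s \<le> exp (- \<alpha> * (s - t)) / \<alpha>"
    using assms by (simp add: pos_le_divide_eq mult.commute)
  then show ?thesis
    using assms by (auto simp: max_def)
qed

lemma integrable_pos_part_if_nn_integral_exp_finite:
  fixes t s :: "'a \<Rightarrow> real"
  assumes "0 < \<alpha>" and [measurable]: "t \<in> borel_measurable M" and s: "integrable M s"
    and exp_finite: "(\<integral>\<^sup>+ x. ennreal (exp (- \<alpha> * (s x - t x))) \<partial>M) < \<infinity>"
  shows "integrable M (\<lambda>x. max 0 (t x))"
proof (rule Bochner_Integration.integrable_bound)
  have "integrable M (\<lambda>x. exp (- \<alpha> * (s x - t x)))"
    using s exp_finite by (intro integrableI_nonneg) auto
  then show "integrable M (\<lambda>x. exp (- \<alpha> * (s x - t x)) / \<alpha> + \<bar>s x\<bar>)"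
    using s by auto
  show "AE x in M. norm (max 0 (t x)) \<le> norm (exp (- \<alpha> * (s x - t x)) / \<alpha> + \<bar>s x\<bar>)"
    using pos_part_le_exp_bound[OF \<open>0 < \<alpha>\<close>] \<open>0 < \<alpha>\<close> by auto
qed (use s in measurable)

lemma admissible_le_real_sum:
  assumes adm: "admissible c V" and finite: "\<And>i. V i (x i) \<noteq> \<infinity>"
  shows "c x \<le> (\<Sum>i\<in>UNIV. real_of_ereal (V i (x i)))"
proof -
  have "V i (x i) = ereal (real_of_ereal (V i (x i)))" for i
    using adm finite[of i] by (cases "V i (x i)") (auto simp: admissible_def)
  then have "(\<Sum>i\<in>UNIV. V i (x i)) = ereal (\<Sum>i\<in>UNIV. real_of_ereal (V i (x i)))"
    by (metis (no_types, lifting) sum.cong sum_ereal)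
  then show ?thesis
    using adm by (metis admissible_def ereal_less_eq(3))
qed

lemma neg_part_le_if_le_sum:
  fixes r :: "'i \<Rightarrow> real"
  assumes "finite I" and "i \<in> I" and "c \<le> (\<Sum>j\<in>I. r j)"
  shows "max 0 (- r i) \<le> \<bar>c\<bar> + (\<Sum>j\<in>I. max 0 (r j))"
proof -
  have "(\<Sum>j\<in>I. r j) - r i = (\<Sum>j\<in>I - {i}. r j)"
    using assms by (simp add: sum.remove)
  also have "\<dots> \<le> (\<Sum>j\<in>I - {i}. max 0 (r j))"
    by (intro sum_mono) simp
  also have "\<dots> \<le> (\<Sum>j\<in>I. max 0 (r j))"
    using assms by (intro sum_mono2) auto
  finally show ?thesis
    using assms sum_nonneg[of I "\<lambda>j. max 0 (r j)"] by auto
qed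

lemma
  fixes f :: "'a::euclidean_space \<Rightarrow> real"
  assumes "is_plan \<mu> \<pi>"
  shows is_plan_component_measurable: "(\<lambda>x. x i) \<in> measurable \<pi> borel"
    and integrable_plan_component_iff:
      "f \<in> borel_measurable borel \<Longrightarrow> integrable \<pi> (\<lambda>x. f (x i)) \<longleftrightarrow> integrable (\<mu> i) f"
    and AE_plan_component:
      "{y \<in> space borel. P y} \<in> sets borel \<Longrightarrow> AE y in \<mu> i. P y \<Longrightarrow> AE x in \<pi>. P (x i)"
proof -
  have sets: "sets \<pi> = sets (PiM UNIV (\<lambda>_. borel))" and marginal: "distr \<pi> borel (\<lambda>x. x i) = \<mu> i"
    using assms by (auto simp: is_plan_def)
  show component: "(\<lambda>x. x i) \<in> measurable \<pi> borel"
    unfolding measurable_cong_sets[OF sets refl] by measurable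
  show "f \<in> borel_measurable borel \<Longrightarrow> integrable \<pi> (\<lambda>x. f (x i)) \<longleftrightarrow> integrable (\<mu> i) f"
    using integrable_distr_eq[OF component, of f] by (simp add: marginal)
  show "{y \<in> space borel. P y} \<in> sets borel \<Longrightarrow> AE y in \<mu> i. P y \<Longrightarrow> AE x in \<pi>. P (x i)"
    by (metis AE_distr_iff[OF component] marginal)
qed

lemma integrable_neg_part_admissible:
  fixes c :: "('i::finite \<Rightarrow> 'a::euclidean_space) \<Rightarrow> real"
  assumes adm: "admissible c \<Phi>" and plan: "is_plan \<mu> \<pi>" and c_int: "integrable \<pi> c"
    and [measurable]: "\<And>j. \<Phi> j \<in> borel_measurable borel"
    and finite: "\<And>j. AE y in \<mu> j. \<Phi> j y \<noteq> \<infinity>"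
    and pos_int: "\<And>j. integrable (\<mu> j) (\<lambda>y. max 0 (real_of_ereal (\<Phi> j y)))"
  shows "integrable (\<mu> i) (\<lambda>y. max 0 (- real_of_ereal (\<Phi> i y)))"
proof -
  note [measurable] = is_plan_component_measurable[OF plan]
  have "integrable \<pi> (\<lambda>x. max 0 (- real_of_ereal (\<Phi> i (x i))))"
  proof (rule Bochner_Integration.integrable_bound)
    have "integrable \<pi> (\<lambda>x. max 0 (real_of_ereal (\<Phi> j (x j))))" for j
      using pos_int[of j] by (subst integrable_plan_component_iff[OF plan]) auto
    then show "integrable \<pi> (\<lambda>x. \<bar>c x\<bar> + (\<Sum>j\<in>UNIV. max 0 (real_of_ereal (\<Phi> j (x j)))))"
      using c_int by auto
    have "AE x in \<pi>. \<forall>j\<in>UNIV. \<Phi> j (x j) \<noteq> \<infinity>"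
      using finite by (intro AE_finite_allI AE_plan_component[OF plan]) auto
    then show "AE x in \<pi>. norm (max 0 (- real_of_ereal (\<Phi> i (x i))))
        \<le> norm (\<bar>c x\<bar> + (\<Sum>j\<in>UNIV. max 0 (real_of_ereal (\<Phi> j (x j)))))"
    proof eventually_elim
      case (elim x)
      then have "c x \<le> (\<Sum>j\<in>UNIV. real_of_ereal (\<Phi> j (x j)))"
        using adm by (intro admissible_le_real_sum) auto
      then have "max 0 (- real_of_ereal (\<Phi> i (x i))) \<le> \<bar>c x\<bar> + (\<Sum>j\<in>UNIV. max 0 (real_of_ereal (\<Phi> j (x j))))"
        by (intro neg_part_le_if_le_sum) auto
      then show ?case
        by (simp add: sum_nonneg)
    qed
  qed (use c_int in measurable)
  then show ?thesis
    by (subst (asm) integrable_plan_component_iff[OF plan]) auto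
qed

locale BS_maximizer =
  fixes c :: "('i::finite \<Rightarrow> 'a::euclidean_space) \<Rightarrow> real"
    and \<alpha> :: "'i \<Rightarrow> real"
    and m :: "'i \<Rightarrow> 'a measure"
    and \<Phi> :: "'i \<Rightarrow> 'a \<Rightarrow> ereal"
  assumes alpha_pos: "\<And>i. \<alpha> i > 0"
    and m_sets: "\<And>i. sets (m i) = sets borel"
    and Phi_meas [measurable]: "\<And>i. \<Phi> i \<in> borel_measurable borel"
    and Phi_adm: "admissible c \<Phi>"
    and Phi_max: "\<And>V. admissible c V \<Longrightarrow> BS \<alpha> m V \<le> BS \<alpha> m \<Phi>"
    and partition_pos: "\<And>i. 0 < (\<integral>\<^sup>+ x. expw (\<alpha> i) (\<Phi> i) x \<partial>m i)"
    and partition_finite: "\<And>i. (\<integral>\<^sup>+ x. expw (\<alpha> i) (\<Phi> i) x \<partial>m i) < \<infinity>"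
begin

abbreviation tilted :: "'i \<Rightarrow> 'a measure" where
  "tilted i \<equiv> gibbs_measure (\<alpha> i) (m i) (\<Phi> i)"

definition exp_excess :: "('i \<Rightarrow> 'a \<Rightarrow> ereal) \<Rightarrow> 'i \<Rightarrow> ennreal" where
  "exp_excess g i =
    (\<integral>\<^sup>+ x. ennreal (exp (- \<alpha> i * (real_of_ereal (g i x) - real_of_ereal (\<Phi> i x)))) \<partial>tilted i)"

lemma sets_tilted [measurable_cong]: "sets (tilted i) = sets borel"
  by (simp add: m_sets)

lemma Phi_meas_m [measurable]: "\<Phi> i \<in> borel_measurable (m i)"
  using Phi_meas by (simp add: measurable_cong_sets[OF m_sets refl])

lemma prob_space_tilted: "prob_space (tilted i)"
  using partition_pos partition_finite by (intro prob_space_gibbs_measure) auto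

lemma BS_Phi_nonzero: "BS \<alpha> m \<Phi> \<noteq> 0"
  unfolding BS_def using partition_pos enn_powr_pos by simp (metis not_gr_zero)

lemma BS_Phi_finite: "BS \<alpha> m \<Phi> \<noteq> \<top>"
  unfolding BS_def using partition_finite by (simp add: ennreal_prod_eq_top less_top[symmetric])

lemma exp_excess_pos:
  assumes [measurable]: "\<And>i. g i \<in> borel_measurable borel"
  shows "0 < exp_excess g i"
proof -
  interpret prob_space "tilted i"
    by (rule prob_space_tilted)
  show ?thesis
    unfolding exp_excess_def by (rule nn_integral_exp_pos) measurable
qed

lemma prod_exp_excess_le_1:
  assumes adm: "admissible c g"
    and [measurable]: "\<And>i. g i \<in> borel_measurable borel"
    and finite: "\<And>i. AE x in tilted i. g i x \<noteq> \<infinity>"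
  shows "(\<Prod>i\<in>UNIV. enn_powr (exp_excess g i) (1 / \<alpha> i)) \<le> 1"
proof -
  let ?Z = "\<lambda>i. \<integral>\<^sup>+ x. expw (\<alpha> i) (\<Phi> i) x \<partial>m i"
  have g_meas_m [measurable]: "g i \<in> borel_measurable (m i)" for i
    using assms(2) by (simp add: measurable_cong_sets[OF m_sets refl])
  have "BS \<alpha> m \<Phi> * (\<Prod>i\<in>UNIV. enn_powr (exp_excess g i) (1 / \<alpha> i))
      = (\<Prod>i\<in>UNIV. enn_powr (?Z i * exp_excess g i) (1 / \<alpha> i))"
    by (simp add: BS_def enn_powr_mult prod.distrib)
  also have "\<dots> \<le> BS \<alpha> m g"
    unfolding BS_def exp_excess_def
    using alpha_pos partition_pos partition_finite finite
    by (intro prod_mono_ennreal enn_powr_mono nn_integral_gibbs_measure_exp_diff_le)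
      (auto simp: less_imp_le)
  also have "\<dots> \<le> BS \<alpha> m \<Phi> * 1"
    using Phi_max[OF adm] by simp
  finally show ?thesis
    using BS_Phi_nonzero BS_Phi_finite by (subst (asm) ennreal_mult_le_mult_iff)
qed

lemma exp_excess_finite:
  assumes "admissible c g"
    and [measurable]: "\<And>i. g i \<in> borel_measurable borel"
    and "\<And>i. AE x in tilted i. g i x \<noteq> \<infinity>"
  shows "exp_excess g i < \<infinity>"
proof (rule ccontr)
  assume "\<not> ?thesis"
  then have "exp_excess g i = \<top>"
    by (simp add: less_top[symmetric])
  moreover have "enn_powr (exp_excess g j) (1 / \<alpha> j) \<noteq> 0" for j
    using exp_excess_pos[of g j] enn_powr_pos by (metis assms(2) not_gr_zero)
  ultimately have "(\<Prod>j\<in>UNIV. enn_powr (exp_excess g j) (1 / \<alpha> j)) = \<top>"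
    by (auto simp: ennreal_prod_eq_top)
  then show False
    using prod_exp_excess_le_1[OF assms] by (simp add: top_unique)
qed

lemma dual_feasible_measurable:
  assumes "dual_feasible c tilted g"
  shows "g i \<in> borel_measurable borel"
  using assms by (simp add: dual_feasible_def measurable_cong_sets[OF sets_tilted refl])

lemma dual_feasible_Phi:
  assumes f: "dual_feasible c tilted f" and plan: "is_plan tilted \<pi>" and c_int: "integrable \<pi> c"
  shows "dual_feasible c tilted \<Phi>"
proof -
  have Phi_finite: "AE x in tilted i. \<Phi> i x \<noteq> \<infinity>" for i
    by (rule AE_gibbs_measure_not_infty) measurable
  have f_int: "integrable (tilted i) (\<lambda>x. real_of_ereal (f i x))" for i
    using f by (simp add: dual_feasible_def)
  have pos: "integrable (tilted i) (\<lambda>x. max 0 (real_of_ereal (\<Phi> i x)))" for i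
  proof (rule integrable_pos_part_if_nn_integral_exp_finite[OF alpha_pos _ f_int])
    show "(\<integral>\<^sup>+ x. ennreal (exp (- \<alpha> i * (real_of_ereal (f i x) - real_of_ereal (\<Phi> i x)))) \<partial>tilted i) < \<infinity>"
      using f dual_feasible_measurable[OF f] exp_excess_finite[of f]
      by (simp add: dual_feasible_def exp_excess_def)
  qed measurable
  have neg: "integrable (tilted i) (\<lambda>x. max 0 (- real_of_ereal (\<Phi> i x)))" for i
    by (rule integrable_neg_part_admissible[OF Phi_adm plan c_int Phi_meas Phi_finite pos])
  have "integrable (tilted i) (\<lambda>x. real_of_ereal (\<Phi> i x))" for i
  proof -
    have "integrable (tilted i) (\<lambda>x. max 0 (real_of_ereal (\<Phi> i x)) - max 0 (- real_of_ereal (\<Phi> i x)))"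
      using pos neg by (rule Bochner_Integration.integrable_diff)
    moreover have "max 0 t - max 0 (- t) = t" for t :: real
      by linarith
    ultimately show ?thesis
      by simp
  qed
  then show ?thesis
    using Phi_adm Phi_finite by (simp add: dual_feasible_def measurable_cong_sets[OF sets_tilted refl])
qed

lemma dual_value_Phi_le:
  assumes Phi: "dual_feasible c tilted \<Phi>" and g: "dual_feasible c tilted g"
  shows "dual_value tilted \<Phi> \<le> dual_value tilted g"
proof -
  define gap where "gap i = (\<integral>x. real_of_ereal (g i x) - real_of_ereal (\<Phi> i x) \<partial>tilted i)" for i
  have gap_int: "integrable (tilted i) (\<lambda>x. real_of_ereal (g i x) - real_of_ereal (\<Phi> i x))" for i
    using Phi g by (auto simp: dual_feasible_def)
  have "ennreal (exp (- gap i)) \<le> enn_powr (exp_excess g i) (1 / \<alpha> i)" for i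
  proof -
    interpret prob_space "tilted i"
      by (rule prob_space_tilted)
    have "ennreal (exp (- \<alpha> i * gap i)) \<le> exp_excess g i"
      unfolding exp_excess_def gap_def using gap_int[of i]
      by (subst integral_mult_right_zero[symmetric]) (rule exp_integral_le_nn_integral_exp, auto)
    then have "enn_powr (ennreal (exp (- \<alpha> i * gap i))) (1 / \<alpha> i) \<le> enn_powr (exp_excess g i) (1 / \<alpha> i)"
      using alpha_pos[of i] by (intro enn_powr_mono) auto
    moreover have "exp (- \<alpha> i * gap i) powr (1 / \<alpha> i) = exp (- gap i)"
      using alpha_pos[of i] by (simp add: powr_def)
    ultimately show ?thesis
      by (simp add: enn_powr_ennreal)
  qed
  then have "ennreal (exp (\<Sum>i\<in>UNIV. - gap i)) \<le> (\<Prod>i\<in>UNIV. enn_powr (exp_excess g i) (1 / \<alpha> i))"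
    by (simp add: exp_sum prod_ennreal[symmetric] prod_mono_ennreal)
  also have "\<dots> \<le> 1"
    using g dual_feasible_measurable[OF g]
    by (intro prod_exp_excess_le_1) (auto simp: dual_feasible_def)
  finally have "0 \<le> (\<Sum>i\<in>UNIV. gap i)"
    by (simp add: sum_negf)
  then show ?thesis
    using Phi g by (simp add: dual_value_def gap_def dual_feasible_def sum_subtractf)
qed

end

theorem corollary2p2:
  fixes c :: "('i::finite \<Rightarrow> 'a::euclidean_space) \<Rightarrow> real"
    and \<alpha> :: "'i \<Rightarrow> real"
    and m \<mu> :: "'i \<Rightarrow> 'a measure"
    and \<Phi> :: "'i \<Rightarrow> 'a \<Rightarrow> ereal"
  assumes alpha_pos: "\<And>i. \<alpha> i > 0"
    and m_sets: "\<And>i. sets (m i) = sets borel"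
    and Phi_meas: "\<And>i. \<Phi> i \<in> borel_measurable borel"
    and Phi_adm: "admissible c \<Phi>"
    and Phi_max: "\<And>V. admissible c V \<Longrightarrow> BS \<alpha> m V \<le> BS \<alpha> m \<Phi>"
    and int_pos: "\<And>i. 0 < (\<integral>\<^sup>+ x. expw (\<alpha> i) (\<Phi> i) x \<partial>m i)"
    and int_fin: "\<And>i. (\<integral>\<^sup>+ x. expw (\<alpha> i) (\<Phi> i) x \<partial>m i) < \<infinity>"
    and mu_def: "\<And>i. \<mu> i = density (m i)
                   (\<lambda>x. expw (\<alpha> i) (\<Phi> i) x / (\<integral>\<^sup>+ y. expw (\<alpha> i) (\<Phi> i) y \<partial>m i))"
    and duality: "kantorovich_duality c \<mu>"
  shows "dual_min c \<mu> \<Phi>"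
proof -
  interpret BS_maximizer c \<alpha> m \<Phi>
    by unfold_locales (fact assms)+
  have mu_tilted: "\<mu> = tilted"
    using mu_def by (auto simp: gibbs_measure_def)
  obtain \<pi> f where "primal_max c \<mu> \<pi>" and "dual_min c \<mu> f"
    using duality by (auto simp: kantorovich_duality_def)
  then have "dual_feasible c tilted f" "is_plan tilted \<pi>" "integrable \<pi> c"
    by (auto simp: primal_max_def dual_min_def mu_tilted)
  then have "dual_feasible c tilted \<Phi>"
    by (rule dual_feasible_Phi)
  then show ?thesis
    by (auto simp: dual_min_def mu_tilted intro: dual_value_Phi_le)
qed

end
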